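(* Let $C>4$ be a constant. Then every Nash equilibrium graph $G$ of the sum network creation game with $n$ players and $\alpha<n/C$ is $(5,\epsilon)$-distance-almost-uniform for $\epsilon=\frac45\left(1+\frac1C\right)$.
   Context: Sum network creation game: players $V=\{1,\dots,n\}$, parameter $\alpha>0$; a strategy of $u$ is $s_u\subseteq V\setminus\{u\}$; $G_s$ has an edge $uv$ whenever $v\in s_u$ or $u\in s_v$; the cost of $u$ is $\alpha|s_u|+\sum_{v\ne u}d_{G_s}(u,v)$. A Nash equilibrium graph is $G_s$ for $s$ from which no player can strictly lower his cost unilaterally. For a graph $G$ on $n$ vertices and $v\in V(G)$, $A_s(v)$ is the set of vertices at distance exactly $s$ from $v$. $G$ is $(k,\epsilon)$-distance-almost-uniform if there exists $r$ such that $\max_{i=0}^{k-1}|A_{r+i}(u)|\ge n(1-\epsilon)$ for all $u\in V(G)$. *)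

theory Defs
  imports "HOL-Analysis.Analysis" "HOL-Library.Extended_Real"
begin

definition edge_rel :: "'a set \<Rightarrow> ('a \<Rightarrow> 'a \<Rightarrow> bool) \<Rightarrow> ('a \<times> 'a) set" where
  "edge_rel V E = {(u, v). u \<in> V \<and> v \<in> V \<and> E u v}"

definition gdist :: "'a set \<Rightarrow> ('a \<Rightarrow> 'a \<Rightarrow> bool) \<Rightarrow> 'a \<Rightarrow> 'a \<Rightarrow> enat" where
  "gdist V E u v =
     (if \<exists>k. (u, v) \<in> edge_rel V E ^^ k
      then enat (LEAST k. (u, v) \<in> edge_rel V E ^^ k) else \<infinity>)"

definition sphere :: "'a set \<Rightarrow> ('a \<Rightarrow> 'a \<Rightarrow> bool) \<Rightarrow> nat \<Rightarrow> 'a \<Rightarrow> 'a set" where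
  "sphere V E s v = {w \<in> V. gdist V E v w = enat s}"

definition distance_almost_uniform ::
    "'a set \<Rightarrow> ('a \<Rightarrow> 'a \<Rightarrow> bool) \<Rightarrow> nat \<Rightarrow> real \<Rightarrow> bool" where
  "distance_almost_uniform V E k eps \<longleftrightarrow>
     (\<exists>r::nat. \<forall>u\<in>V.
        real (Max ((\<lambda>i. card (sphere V E (r + i) u)) ` {..<k})) \<ge> real (card V) * (1 - eps))"

definition players :: "nat \<Rightarrow> nat set" where
  "players n = {1..n}"

definition game_edge :: "(nat \<Rightarrow> nat set) \<Rightarrow> nat \<Rightarrow> nat \<Rightarrow> bool" where
  "game_edge s u v \<longleftrightarrow> v \<in> s u \<or> u \<in> s v"

definition valid_profile :: "nat \<Rightarrow> (nat \<Rightarrow> nat set) \<Rightarrow> bool" where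
  "valid_profile n s \<longleftrightarrow> (\<forall>u\<in>players n. s u \<subseteq> players n - {u})"

definition player_cost :: "nat \<Rightarrow> real \<Rightarrow> (nat \<Rightarrow> nat set) \<Rightarrow> nat \<Rightarrow> ereal" where
  "player_cost n \<alpha> s u =
     ereal (\<alpha> * real (card (s u)))
     + (\<Sum>v\<in>players n - {u}. ereal_of_enat (gdist (players n) (game_edge s) u v))"

definition nash_equilibrium :: "nat \<Rightarrow> real \<Rightarrow> (nat \<Rightarrow> nat set) \<Rightarrow> bool" where
  "nash_equilibrium n \<alpha> s \<longleftrightarrow> valid_profile n s \<and>
     (\<forall>u\<in>players n. \<forall>t. t \<subseteq> players n - {u} \<longrightarrow>
        player_cost n \<alpha> s u \<le> player_cost n \<alpha> (s(u := t)) u)"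

end

theory Submission
  imports Defs
begin

text \<open>Write d for the graph distance. If d(c, z) + 2 \<le> d(u, z), buying the edge uc shortens
  the distance from u to z by at least one, so in equilibrium at most \<alpha> vertices z are of this
  kind; hence at most 2\<alpha> vertices z have |d(a, z) - d(b, z)| \<ge> 2, for any a and b.
  Double counting with a fixed vertex w gives a vertex c with |d(c, w) - d(c, z)| \<le> 1 for all
  but 2\<alpha> vertices z. For every v, all but another 2\<alpha> of these satisfy
  |d(v, z) - d(c, z)| \<le> 1, so they lie in one of the five spheres around v of radii
  d(w, c) - 2, ..., d(w, c) + 2, and one of them has at least (n - 4\<alpha>)/5 elements.\<close>

lemma gdist_le_of_relpow: "(u, v) \<in> edge_rel V E ^^ k \<Longrightarrow> gdist V E u v \<le> enat k"
  unfolding gdist_def by (auto intro: Least_le)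

lemma relpow_of_gdist_eq: "gdist V E u v = enat k \<Longrightarrow> (u, v) \<in> edge_rel V E ^^ k"
  unfolding gdist_def by (auto split: if_splits intro: LeastI)

lemma gdist_self [simp]: "gdist V E u u = 0"
  by (metis gdist_le_of_relpow relpow_0_I le_zero_eq zero_enat_def)

lemma relpow_sym: "sym R \<Longrightarrow> (x, y) \<in> R ^^ k \<Longrightarrow> (y, x) \<in> R ^^ k"
  unfolding relpow_fun_conv
proof (elim exE conjE)
  fix f assume "sym R" "f 0 = x" "f k = y" "\<forall>i<k. (f i, f (Suc i)) \<in> R"
  then show "\<exists>g. g 0 = y \<and> g k = x \<and> (\<forall>i<k. (g i, g (Suc i)) \<in> R)"
  proof (intro exI[of _ "\<lambda>i. f (k - i)"] conjI allI impI)
    fix i assume "i < k"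
    then have "(f (k - Suc i), f (k - i)) \<in> R"
      using \<open>\<forall>i<k. (f i, f (Suc i)) \<in> R\<close>[rule_format, of "k - Suc i"] by (simp add: Suc_diff_Suc)
    then show "(f (k - i), f (k - Suc i)) \<in> R" by (rule symD[OF \<open>sym R\<close>])
  qed (use \<open>f 0 = x\<close> \<open>f k = y\<close> in auto)
qed

lemma relpow_mono:
  fixes R S :: "('a \<times> 'a) set"
  assumes "R \<subseteq> S"
  shows "(x, y) \<in> R ^^ k \<Longrightarrow> (x, y) \<in> S ^^ k"
proof (induction k arbitrary: y)
  case (Suc k)
  then obtain z where "(x, z) \<in> R ^^ k" "(z, y) \<in> R" by (blast elim: relpow_Suc_E)
  with Suc.IH assms show ?case by (blast intro: relpow_Suc_I)
qed simp

lemma gdist_sym: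
  assumes "\<And>x y. E x y \<Longrightarrow> E y x"
  shows "gdist V E u v = gdist V E v u"
proof -
  have "sym (edge_rel V E)" using assms by (auto simp: edge_rel_def intro: symI)
  then have "(u, v) \<in> edge_rel V E ^^ k \<longleftrightarrow> (v, u) \<in> edge_rel V E ^^ k" for k
    by (blast intro: relpow_sym)
  then show ?thesis unfolding gdist_def by simp
qed

lemma gdist_mono_edges:
  assumes "\<And>x y. E x y \<Longrightarrow> E' x y"
  shows "gdist V E' u v \<le> gdist V E u v"
proof (cases "gdist V E u v")
  case (enat k)
  have "edge_rel V E \<subseteq> edge_rel V E'" using assms by (auto simp: edge_rel_def)
  with enat show ?thesis by (metis gdist_le_of_relpow relpow_mono relpow_of_gdist_eq)
qed simp

lemma gdist_edge_step:
  assumes "(u, c) \<in> edge_rel V E"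
  shows "gdist V E u z \<le> gdist V E c z + 1"
proof (cases "gdist V E c z")
  case (enat k)
  then have "(u, z) \<in> edge_rel V E ^^ Suc k"
    using assms by (blast intro: relpow_Suc_I2 relpow_of_gdist_eq)
  with enat show ?thesis using gdist_le_of_relpow by (fastforce simp: one_enat_def)
qed simp

lemma game_edge_sym: "game_edge s x y \<Longrightarrow> game_edge s y x"
  unfolding game_edge_def by auto

lemma finite_players [simp]: "finite (players n)"
  by (simp add: players_def)

lemma card_players [simp]: "card (players n) = n"
  by (simp add: players_def)

lemma valid_profile_strategy_subset:
  "valid_profile n s \<Longrightarrow> u \<in> players n \<Longrightarrow> s u \<subseteq> players n - {u}"
  unfolding valid_profile_def by blast

text \<open>Otherwise a player at infinite distance from someone would gain by buying all edges.\<close>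
lemma nash_equilibrium_connected:
  assumes ne: "nash_equilibrium n \<alpha> s" and u: "u \<in> players n" and v: "v \<in> players n"
  shows "gdist (players n) (game_edge s) u v \<noteq> \<infinity>"
proof
  assume inf: "gdist (players n) (game_edge s) u v = \<infinity>"
  then have "u \<noteq> v" by auto
  define s' where "s' = s(u := players n - {u})"
  have "(\<Sum>w\<in>players n - {u}. ereal_of_enat (gdist (players n) (game_edge s) u w)) = \<infinity>"
    using inf v \<open>u \<noteq> v\<close> by (subst sum_Pinfty) force
  then have "player_cost n \<alpha> s u = \<infinity>"
    unfolding player_cost_def by simp
  moreover have "player_cost n \<alpha> s u \<le> player_cost n \<alpha> s' u"
    using ne u unfolding nash_equilibrium_def s'_def by blast
  moreover have "gdist (players n) (game_edge s') u w \<le> 1" if "w \<in> players n - {u}" for w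
  proof -
    have "(u, w) \<in> edge_rel (players n) (game_edge s') ^^ 1"
      using that u by (simp add: edge_rel_def game_edge_def s'_def)
    then show ?thesis using gdist_le_of_relpow one_enat_def by metis
  qed
  then have "(\<Sum>w\<in>players n - {u}. ereal_of_enat (gdist (players n) (game_edge s') u w)) \<noteq> \<infinity>"
    unfolding sum_Pinfty by (metis ereal_of_enat_inf infinity_ileE one_enat_def)
  then have "player_cost n \<alpha> s' u \<noteq> \<infinity>"
    unfolding player_cost_def by simp
  ultimately show False by simp
qed

text \<open>Meaningless on pairs at infinite distance, which Nash equilibria do not have.\<close>
definition game_dist :: "nat \<Rightarrow> (nat \<Rightarrow> nat set) \<Rightarrow> nat \<Rightarrow> nat \<Rightarrow> nat" where
  "game_dist n s u v = the_enat (gdist (players n) (game_edge s) u v)"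

lemma gdist_eq_game_dist:
  "nash_equilibrium n \<alpha> s \<Longrightarrow> u \<in> players n \<Longrightarrow> v \<in> players n \<Longrightarrow>
    gdist (players n) (game_edge s) u v = enat (game_dist n s u v)"
  using nash_equilibrium_connected unfolding game_dist_def by fastforce

lemma game_dist_sym: "game_dist n s u v = game_dist n s v u"
  unfolding game_dist_def using gdist_sym[of "game_edge s", OF game_edge_sym] by metis

lemma game_dist_self [simp]: "game_dist n s u u = 0"
  by (simp add: game_dist_def zero_enat_def)

lemma player_cost_nash_equilibrium:
  assumes "nash_equilibrium n \<alpha> s" and "u \<in> players n"
  shows "player_cost n \<alpha> s u =
    ereal (\<alpha> * card (s u) + (\<Sum>z\<in>players n - {u}. real (game_dist n s u z)))"
proof -
  have "(\<Sum>z\<in>players n - {u}. ereal_of_enat (gdist (players n) (game_edge s) u z)) =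
      (\<Sum>z\<in>players n - {u}. ereal (real (game_dist n s u z)))"
    using gdist_eq_game_dist[OF assms] by (intro sum.cong) auto
  then show ?thesis unfolding player_cost_def by simp
qed

lemma player_cost_buy_edge_le:
  assumes ne: "nash_equilibrium n \<alpha> s" and "0 \<le> \<alpha>"
    and u: "u \<in> players n" and c: "c \<in> players n"
  shows "player_cost n \<alpha> (s(u := insert c (s u))) u \<le>
    ereal (\<alpha> * (card (s u) + 1) +
      (\<Sum>z\<in>players n - {u}. real (min (game_dist n s u z) (game_dist n s c z + 1))))"
proof -
  define s' where "s' = s(u := insert c (s u))"
  let ?d' = "gdist (players n) (game_edge s')"
  have "s u \<subseteq> players n"
    using ne u valid_profile_strategy_subset unfolding nash_equilibrium_def by blast
  then have "card (s' u) \<le> card (s u) + 1"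
    unfolding s'_def by (simp add: card_insert_if finite_subset)
  then have card: "\<alpha> * card (s' u) \<le> \<alpha> * (card (s u) + 1)"
    using \<open>0 \<le> \<alpha>\<close> by (intro mult_left_mono) simp_all
  have dist: "?d' u z \<le> enat (min (game_dist n s u z) (game_dist n s c z + 1))"
    if z: "z \<in> players n" for z
  proof -
    have sub: "?d' x z \<le> gdist (players n) (game_edge s) x z" for x
      by (rule gdist_mono_edges) (auto simp: game_edge_def s'_def)
    have "(u, c) \<in> edge_rel (players n) (game_edge s')"
      using u c by (simp add: edge_rel_def game_edge_def s'_def)
    then have "?d' u z \<le> ?d' c z + 1" by (rule gdist_edge_step)
    also have "\<dots> \<le> enat (game_dist n s c z) + 1"
      using sub[of c] gdist_eq_game_dist[OF ne c z] by (metis add_right_mono)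
    finally have "?d' u z \<le> enat (game_dist n s c z + 1)"
      by (simp add: one_enat_def)
    moreover have "?d' u z \<le> enat (game_dist n s u z)"
      using sub[of u] gdist_eq_game_dist[OF ne u z] by simp
    ultimately show ?thesis by (simp add: min_def)
  qed
  have "(\<Sum>z\<in>players n - {u}. ereal_of_enat (?d' u z)) \<le>
      (\<Sum>z\<in>players n - {u}. ereal_of_enat (enat (min (game_dist n s u z) (game_dist n s c z + 1))))"
    using dist by (intro sum_mono) (simp only: ereal_of_enat_le_iff DiffD1)
  with card show ?thesis
    unfolding player_cost_def s'_def[symmetric] plus_ereal.simps(1)[symmetric]
    by (intro add_mono) simp_all
qed

text \<open>Buying the edge to c must not pay off for u, and it shortens the distance to every z
  counted here by at least one.\<close>
lemma card_shortcut_targets_le: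
  assumes ne: "nash_equilibrium n \<alpha> s" and "0 \<le> \<alpha>"
    and u: "u \<in> players n" and c: "c \<in> players n"
  shows "real (card {z \<in> players n. game_dist n s c z + 2 \<le> game_dist n s u z}) \<le> \<alpha>"
proof (cases "c = u")
  case True
  then show ?thesis using \<open>0 \<le> \<alpha>\<close> by simp
next
  case False
  let ?d = "game_dist n s" and ?S = "{z \<in> players n. game_dist n s c z + 2 \<le> game_dist n s u z}"
  define gain where "gain z = real (?d u z) - real (min (?d u z) (?d c z + 1))" for z
  have "insert c (s u) \<subseteq> players n - {u}"
    using ne u c False valid_profile_strategy_subset unfolding nash_equilibrium_def by blast
  then have "player_cost n \<alpha> s u \<le> player_cost n \<alpha> (s(u := insert c (s u))) u"
    using ne u unfolding nash_equilibrium_def by blast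
  then have "ereal (\<alpha> * card (s u) + (\<Sum>z\<in>players n - {u}. real (?d u z))) \<le>
      ereal (\<alpha> * (card (s u) + 1) + (\<Sum>z\<in>players n - {u}. real (min (?d u z) (?d c z + 1))))"
    unfolding player_cost_nash_equilibrium[OF ne u]
    using player_cost_buy_edge_le[OF ne \<open>0 \<le> \<alpha>\<close> u c] by (rule order_trans)
  then have total: "(\<Sum>z\<in>players n - {u}. gain z) \<le> \<alpha>"
    by (simp add: gain_def sum_subtractf algebra_simps)
  have "?S \<subseteq> players n - {u}" by auto
  have "real (card ?S) = (\<Sum>z\<in>?S. 1)" by simp
  also have "\<dots> \<le> (\<Sum>z\<in>?S. gain z)"
    by (intro sum_mono) (auto simp: gain_def)
  also have "\<dots> \<le> (\<Sum>z\<in>players n - {u}. gain z)"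
    using \<open>?S \<subseteq> players n - {u}\<close> by (intro sum_mono2) (auto simp: gain_def)
  finally show ?thesis using total by linarith
qed

definition separating_set :: "nat \<Rightarrow> (nat \<Rightarrow> nat set) \<Rightarrow> nat \<Rightarrow> nat \<Rightarrow> nat set" where
  "separating_set n s a b = {z \<in> players n.
     game_dist n s a z + 2 \<le> game_dist n s b z \<or> game_dist n s b z + 2 \<le> game_dist n s a z}"

lemma card_separating_set_le:
  assumes "nash_equilibrium n \<alpha> s" and "0 \<le> \<alpha>" and "a \<in> players n" and "b \<in> players n"
  shows "real (card (separating_set n s a b)) \<le> 2 * \<alpha>"
proof -
  have "separating_set n s a b =
      {z \<in> players n. game_dist n s a z + 2 \<le> game_dist n s b z} \<union>
      {z \<in> players n. game_dist n s b z + 2 \<le> game_dist n s a z}"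
    unfolding separating_set_def by auto
  then have "card (separating_set n s a b) \<le>
      card {z \<in> players n. game_dist n s a z + 2 \<le> game_dist n s b z} +
      card {z \<in> players n. game_dist n s b z + 2 \<le> game_dist n s a z}"
    by (simp add: card_Un_le)
  with card_shortcut_targets_le[OF assms(1,2,3,4)] card_shortcut_targets_le[OF assms(1,2,4,3)]
  show ?thesis by linarith
qed

lemma exists_row_card_le:
  fixes B :: real
  assumes "finite V" and "V \<noteq> {}" and "\<And>z. z \<in> V \<Longrightarrow> card {y \<in> V. P y z} \<le> B"
  shows "\<exists>y\<in>V. card {z \<in> V. P y z} \<le> B"
proof (rule ccontr)
  have card_sum: "real (card {x \<in> V. Q x}) = (\<Sum>x\<in>V. if Q x then 1 else 0)" for Q
    using sum.inter_filter[OF \<open>finite V\<close>, of "\<lambda>_. 1 :: real" Q] by simp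
  assume "\<not> ?thesis"
  then have "(\<Sum>y\<in>V. B) < (\<Sum>y\<in>V. real (card {z \<in> V. P y z}))"
    using assms(1,2) by (intro sum_strict_mono) auto
  also have "\<dots> = (\<Sum>z\<in>V. real (card {y \<in> V. P y z}))"
    unfolding card_sum by (rule sum.swap)
  also have "\<dots> \<le> (\<Sum>z\<in>V. B)"
    using assms(3) by (intro sum_mono)
  finally show False by simp
qed

lemma exists_vertex_rarely_separating:
  assumes ne: "nash_equilibrium n \<alpha> s" and "0 \<le> \<alpha>" and w: "w \<in> players n"
  shows "\<exists>c\<in>players n. real (card {z \<in> players n. c \<in> separating_set n s w z}) \<le> 2 * \<alpha>"
proof (rule exists_row_card_le)
  fix z assume "z \<in> players n"
  moreover have "{c \<in> players n. c \<in> separating_set n s w z} = separating_set n s w z"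
    by (auto simp: separating_set_def)
  ultimately show "real (card {c \<in> players n. c \<in> separating_set n s w z}) \<le> 2 * \<alpha>"
    using card_separating_set_le[OF ne \<open>0 \<le> \<alpha>\<close> w] by simp
qed (use w in auto)

lemma card_UN_le_card_mult_Max:
  "card (\<Union>i<k. A i) \<le> k * Max ((\<lambda>i. card (A i)) ` {..<k})"
proof -
  have "card (\<Union>i<k. A i) \<le> (\<Sum>i<k. card (A i))"
    by (rule card_UN_le) simp
  also have "\<dots> \<le> (\<Sum>i<k. Max ((\<lambda>i. card (A i)) ` {..<k}))"
    by (intro sum_mono Max_ge) auto
  finally show ?thesis by simp
qed

text \<open>A vertex z outside both exceptional sets satisfies |d(c, z) - d(w, c)| \<le> 1 and
  |d(v, z) - d(c, z)| \<le> 1, so it lies in one of the five spheres.\<close>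
lemma card_players_le_annulus:
  assumes ne: "nash_equilibrium n \<alpha> s" and "0 \<le> \<alpha>"
    and v: "v \<in> players n" and c: "c \<in> players n" and w: "w \<in> players n"
    and rare: "real (card {z \<in> players n. c \<in> separating_set n s w z}) \<le> 2 * \<alpha>"
  shows "real n \<le> 4 * \<alpha> + 5 * real (Max ((\<lambda>i. card (sphere (players n) (game_edge s)
           (game_dist n s w c - 2 + i) v)) ` {..<5}))"
proof -
  let ?d = "game_dist n s" and ?r = "game_dist n s w c - 2"
  let ?A = "\<lambda>i. sphere (players n) (game_edge s) (?r + i) v"
  let ?X = "{z \<in> players n. c \<in> separating_set n s w z}"
  have "players n \<subseteq> ?X \<union> separating_set n s v c \<union> (\<Union>i<5. ?A i)"
  proof
    fix z assume z: "z \<in> players n"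
    show "z \<in> ?X \<union> separating_set n s v c \<union> (\<Union>i<5. ?A i)"
    proof (cases "z \<in> ?X \<union> separating_set n s v c")
      case False
      then have "?r \<le> ?d v z" and "?d v z - ?r < 5"
        using z c game_dist_sym[of n s z c] by (auto simp: separating_set_def)
      moreover have "z \<in> ?A (?d v z - ?r)"
        using gdist_eq_game_dist[OF ne v z] z \<open>?r \<le> ?d v z\<close> by (simp add: sphere_def)
      ultimately show ?thesis by blast
    qed simp
  qed
  then have "card (players n) \<le> card (?X \<union> separating_set n s v c \<union> (\<Union>i<5. ?A i))"
    by (rule card_mono[rotated]) (auto simp: separating_set_def sphere_def)
  also have "\<dots> \<le> card ?X + card (separating_set n s v c) + card (\<Union>i<5. ?A i)"
    using card_Un_le[of "?X \<union> separating_set n s v c" "\<Union>i<5. ?A i"]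
      card_Un_le[of ?X "separating_set n s v c"] by linarith
  finally show ?thesis
    using rare card_separating_set_le[OF ne \<open>0 \<le> \<alpha>\<close> v c]
      card_UN_le_card_mult_Max[where k = 5 and A = ?A] by simp
qed

theorem proposition9:
  fixes C \<alpha> :: real and n :: nat and s :: "nat \<Rightarrow> nat set"
  assumes "C > 4"
    and "\<alpha> > 0"
    and "\<alpha> < real n / C"
    and "nash_equilibrium n \<alpha> s"
  shows "distance_almost_uniform (players n) (game_edge s) 5 (4/5 * (1 + 1/C))"
proof -
  have "n > 0" using assms(1-3) by (cases n) auto
  then have w: "1 \<in> players n" by (simp add: players_def)
  obtain c where c: "c \<in> players n"
    and rare: "real (card {z \<in> players n. c \<in> separating_set n s 1 z}) \<le> 2 * \<alpha>"
    using exists_vertex_rarely_separating[OF assms(4) _ w] assms(2) by auto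
  have "real n * (1 - 4/5 * (1 + 1/C)) \<le> (real n - 4 * \<alpha>) / 5"
    using assms(1,3) by (simp add: field_simps)
  also have "\<dots> \<le> real (Max ((\<lambda>i. card (sphere (players n) (game_edge s)
      (game_dist n s 1 c - 2 + i) v)) ` {..<5}))" if "v \<in> players n" for v
    using card_players_le_annulus[OF assms(4) _ that c w rare] assms(2) by simp
  finally show ?thesis
    unfolding distance_almost_uniform_def by auto
qed

end
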